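(* Let $m\ge3$, $n\ge1$ and $k=\lfloor n/2\rfloor$. For every probability distribution $p$ on the $m!$ strict rankings of $m$ candidates, $$P(m,n;p)\;\ge\;m\Bigl(1-B\bigl(k;n,\tfrac1m\bigr)\Bigr),$$ and equality holds for the distribution $p^*$ that assigns probability $1/m$ to each of the $m$ cyclic rankings $C_1C_2\cdots C_m$, $C_2C_3\cdots C_mC_1$, $\dots$, $C_mC_1\cdots C_{m-1}$ and probability $0$ to all other rankings. Thus $p^*$ minimizes the probability of a Condorcet winner, and the minimum value is $m(1-B(k;n,1/m))$.
   Context: $n$ voters independently choose a strict ranking (listed best to worst) of the candidates $C_1,\dots,C_m$ according to $p$. A candidate is a Condorcet winner if, for every other candidate, strictly more than $n/2$ voters rank it above that candidate. $P(m,n;p)$ is the probability that a Condorcet winner exists. $B(k;n,q)=\sum_{j=0}^{k}\binom nj q^j(1-q)^{n-j}$ is the binomial cumulative distribution function. *)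

theory Defs
  imports "HOL-Combinatorics.Multiset_Permutations" "HOL-Library.FuncSet" Complex_Main
begin

text \<open>Candidates C_1,...,C_m are encoded as 0,...,m-1. A strict ranking is a list
  listing every candidate exactly once, best first.\<close>

definition rankings :: "nat \<Rightarrow> nat list set" where
  "rankings m = permutations_of_set {0..<m}"

definition ranks_above :: "nat list \<Rightarrow> nat \<Rightarrow> nat \<Rightarrow> bool" where
  "ranks_above r a b \<longleftrightarrow> (\<exists>i j. i < j \<and> j < length r \<and> r ! i = a \<and> r ! j = b)"

definition profiles :: "nat \<Rightarrow> nat \<Rightarrow> (nat \<Rightarrow> nat list) set" where
  "profiles m n = PiE {0..<n} (\<lambda>_. rankings m)"

definition condorcet_winner :: "nat \<Rightarrow> nat \<Rightarrow> (nat \<Rightarrow> nat list) \<Rightarrow> nat \<Rightarrow> bool" where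
  "condorcet_winner m n f c \<longleftrightarrow> c < m \<and>
     (\<forall>d<m. d \<noteq> c \<longrightarrow> 2 * card {i \<in> {0..<n}. ranks_above (f i) c d} > n)"

definition is_ranking_distribution :: "nat \<Rightarrow> (nat list \<Rightarrow> real) \<Rightarrow> bool" where
  "is_ranking_distribution m p \<longleftrightarrow>
     (\<forall>r\<in>rankings m. p r \<ge> 0) \<and> (\<Sum>r\<in>rankings m. p r) = 1"

text \<open>P(m,n;p): probability that n independent voters, each drawing a ranking
  according to p, produce a profile with a Condorcet winner.\<close>
definition condorcet_prob :: "nat \<Rightarrow> nat \<Rightarrow> (nat list \<Rightarrow> real) \<Rightarrow> real" where
  "condorcet_prob m n p =
     (\<Sum>f\<in>{f\<in>profiles m n. \<exists>c. condorcet_winner m n f c}. \<Prod>i\<in>{0..<n}. p (f i))"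

definition binom_cdf :: "nat \<Rightarrow> nat \<Rightarrow> real \<Rightarrow> real" where
  "binom_cdf k n q = (\<Sum>j=0..k. real (n choose j) * q ^ j * (1 - q) ^ (n - j))"

definition cyclic_ranking :: "nat \<Rightarrow> nat \<Rightarrow> nat list" where
  "cyclic_ranking m j = map (\<lambda>i. (j + i) mod m) [0..<m]"

definition p_star :: "nat \<Rightarrow> nat list \<Rightarrow> real" where
  "p_star m r = (if r \<in> cyclic_ranking m ` {0..<m} then 1 / real m else 0)"

end

theory Submission
  imports Defs "HOL-Analysis.Convex"
begin

text \<open>A candidate ranked first by a strict majority of the voters is a Condorcet winner, and at
  most one candidate can be such a majority winner. Hence \<open>P(m,n;p) \<ge> \<Sum>\<^sub>c T(q\<^sub>c)\<close>, where
  \<open>q\<^sub>c\<close> is the probability that \<open>c\<close> is ranked first and \<open>T(q) = 1 - B(k;n,q)\<close> is the binomial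
  tail. Its derivative \<open>n binom(n-1,k) q^k (1-q)^(n-1-k)\<close> increases on \<open>[0,1/2]\<close> because
  \<open>n-1-k \<le> k\<close>, so \<open>T\<close> is convex there; since at most one \<open>q\<^sub>c\<close> exceeds \<open>1/2\<close>, Jensen's
  inequality together with an exchange argument for the largest \<open>q\<^sub>c\<close> gives
  \<open>\<Sum>\<^sub>c T(q\<^sub>c) \<ge> m T(1/m)\<close>. Under the cyclic distribution only voters whose ranking starts
  with \<open>c\<close> put \<open>c\<close> above its cyclic predecessor, so Condorcet winners are exactly first-place
  majority winners and all \<open>q\<^sub>c = 1/m\<close>: equality holds.\<close>

definition binomial_tail :: "nat \<Rightarrow> nat \<Rightarrow> real \<Rightarrow> real" where
  "binomial_tail n k q = (\<Sum>j=Suc k..n. real (n choose j) * q ^ j * (1 - q) ^ (n - j))"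

definition binomial_tail_deriv :: "nat \<Rightarrow> nat \<Rightarrow> real \<Rightarrow> real" where
  "binomial_tail_deriv n k q = real n * real ((n - 1) choose k) * q ^ k * (1 - q) ^ (n - 1 - k)"

lemma one_minus_binom_cdf:
  assumes "k \<le> n"
  shows "1 - binom_cdf k n q = binomial_tail n k q"
proof -
  have "1 = (q + (1 - q)) ^ n" by simp
  also have "\<dots> = (\<Sum>j\<le>n. real (n choose j) * q ^ j * (1 - q) ^ (n - j))"
    by (rule binomial_ring)
  also have "{..n} = {0..k} \<union> {Suc k..n}" using assms by auto
  also have "(\<Sum>j\<in>{0..k} \<union> {Suc k..n}. real (n choose j) * q ^ j * (1 - q) ^ (n - j)) =
      binom_cdf k n q + binomial_tail n k q"
    unfolding binom_cdf_def binomial_tail_def by (rule sum.union_disjoint) auto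
  finally show ?thesis by simp
qed

lemma binomial_term_has_derivative:
  assumes "i < n"
  shows "((\<lambda>q. real (n choose Suc i) * q ^ Suc i * (1 - q) ^ (n - Suc i)) has_real_derivative
          binomial_tail_deriv n i q - binomial_tail_deriv n (Suc i) q) (at q)"
proof -
  have absorb: "real (n choose Suc i) * real (Suc i) = real n * real ((n - 1) choose i)"
    using binomial_absorption[of i n] by (metis of_nat_mult mult.commute)
  have absorb_comp: "real (n choose Suc i) * real (n - 1 - i) = real n * real ((n - 1) choose Suc i)"
    using binomial_absorb_comp[of n "Suc i"] by (metis of_nat_mult mult.commute diff_Suc_eq_diff_pred)
  have exps: "n - Suc i = n - 1 - i" "n - 1 - i - Suc 0 = n - 1 - Suc i" "Suc i - Suc 0 = i"
    using assms by auto
  show ?thesis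
    apply (rule derivative_eq_intros refl)+
    apply (simp only: binomial_tail_deriv_def exps)
    unfolding absorb[symmetric] absorb_comp[symmetric]
    by (simp add: algebra_simps)
qed

lemma binomial_tail_has_derivative:
  assumes "k \<le> n"
  shows "(binomial_tail n k has_real_derivative binomial_tail_deriv n k q) (at q)"
proof -
  have ivl: "{Suc k..n} = {Suc k..<Suc n}" by auto
  have tail: "binomial_tail n k =
      (\<lambda>q. \<Sum>i=k..<n. real (n choose Suc i) * q ^ Suc i * (1 - q) ^ (n - Suc i))"
    by (intro ext) (simp only: binomial_tail_def ivl sum.shift_bounds_Suc_ivl)
  have "(binomial_tail n k has_real_derivative
          (\<Sum>i=k..<n. binomial_tail_deriv n i q - binomial_tail_deriv n (Suc i) q)) (at q)"
    unfolding tail by (intro DERIV_sum binomial_term_has_derivative) simp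
  also have "(\<Sum>i=k..<n. binomial_tail_deriv n i q - binomial_tail_deriv n (Suc i) q) =
      binomial_tail_deriv n k q - binomial_tail_deriv n n q"
    using sum_Suc_diff'[OF assms, of "\<lambda>i. - binomial_tail_deriv n i q"] by simp
  also have "binomial_tail_deriv n n q = 0"
    by (cases n) (simp_all add: binomial_tail_deriv_def)
  finally show ?thesis by simp
qed

lemma binomial_tail_deriv_mono:
  assumes "n - 1 - k \<le> k" "0 \<le> s" "s \<le> x" "s + x \<le> 1"
  shows "binomial_tail_deriv n k s \<le> binomial_tail_deriv n k x"
proof -
  define l where "l = n - 1 - k"
  \<comment> \<open>Both factors grow from \<open>s\<close> to \<open>x\<close>: \<open>x(1-x) - s(1-s) = (x-s)(1-x-s)\<close>.\<close>
  have split: "q ^ k * (1 - q) ^ l = q ^ (k - l) * (q * (1 - q)) ^ l" for q :: real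
    using assms(1) by (simp add: l_def power_mult_distrib power_add[symmetric])
  have "s * (1 - s) \<le> x * (1 - x)"
    using mult_nonneg_nonneg[of "x - s" "1 - x - s"] assms by (simp add: algebra_simps)
  then have "(s * (1 - s)) ^ l \<le> (x * (1 - x)) ^ l"
    using assms by (intro power_mono) auto
  moreover have "s ^ (k - l) \<le> x ^ (k - l)"
    using assms by (intro power_mono) auto
  ultimately have "s ^ k * (1 - s) ^ l \<le> x ^ k * (1 - x) ^ l"
    unfolding split using assms by (intro mult_mono) auto
  then show ?thesis
    unfolding binomial_tail_deriv_def l_def mult.assoc by (simp add: mult_left_mono)
qed

lemma convex_on_binomial_tail:
  assumes "k \<le> n" "n - 1 - k \<le> k"
  shows "convex_on {0..1/2} (binomial_tail n k)"
  by (intro convex_on_realI[where f' = "binomial_tail_deriv n k"] binomial_tail_has_derivative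
      binomial_tail_deriv_mono assms) auto

lemma convex_on_mean_le:
  fixes f :: "real \<Rightarrow> real"
  assumes "convex_on C f" "finite S" "S \<noteq> {}" "\<And>c. c \<in> S \<Longrightarrow> q c \<in> C"
  shows "real (card S) * f ((\<Sum>c\<in>S. q c) / real (card S)) \<le> (\<Sum>c\<in>S. f (q c))"
proof -
  have card: "real (card S) > 0" using assms(2,3) by (simp add: card_gt_0_iff)
  have "f (\<Sum>c\<in>S. (1 / real (card S)) *\<^sub>R q c) \<le> (\<Sum>c\<in>S. 1 / real (card S) * f (q c))"
    using card by (intro convex_on_sum[OF assms(2,3,1)] assms(4)) auto
  then show ?thesis
    using card by (simp add: sum_divide_distrib[symmetric] field_simps)
qed

lemma binomial_tail_exchange:
  assumes "k \<le> n" "n - 1 - k \<le> k" "m \<ge> 2" "1 / real m \<le> x" "x \<le> 1"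
  shows "real m * binomial_tail n k (1 / real m)
         \<le> binomial_tail n k x + (real m - 1) * binomial_tail n k ((1 - x) / (real m - 1))"
proof -
  let ?T = "binomial_tail n k" and ?D = "binomial_tail_deriv n k"
  \<comment> \<open>\<open>F\<close> increases on \<open>[1/m, x]\<close>: there \<open>(1-t)/(m-1) \<le> t\<close> and \<open>(1-t)/(m-1) + t \<le> 1\<close>,
    so \<open>binomial_tail_deriv_mono\<close> makes its derivative nonnegative.\<close>
  define F where "F t = ?T t + (real m - 1) * ?T ((1 - t) / (real m - 1))" for t
  have m1: "real m - 1 > 0" using assms(3) by simp
  have deriv: "(F has_real_derivative ?D t - ?D ((1 - t) / (real m - 1))) (at t)" for t
  proof -
    have "((\<lambda>t. (1 - t) / (real m - 1)) has_real_derivative (0 - 1) / (real m - 1)) (at t)"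
      by (intro DERIV_cdivide DERIV_diff DERIV_const DERIV_ident)
    then have "((\<lambda>t. ?T ((1 - t) / (real m - 1))) has_real_derivative
        ?D ((1 - t) / (real m - 1)) * ((0 - 1) / (real m - 1))) (at t)"
      by (rule DERIV_chain2[OF binomial_tail_has_derivative[OF assms(1)]])
    then show ?thesis
      unfolding F_def[abs_def] using m1
      by (auto intro!: derivative_eq_intros binomial_tail_has_derivative[OF assms(1)])
  qed
  have "?D ((1 - t) / (real m - 1)) \<le> ?D t" if t: "1 / real m \<le> t" "t \<le> x" for t
  proof (rule binomial_tail_deriv_mono[OF assms(2)])
    have "1 \<le> real m * t" using t assms(3) by (simp add: field_simps)
    then show "(1 - t) / (real m - 1) \<le> t" using m1 by (simp add: field_simps)
    have "0 \<le> (real m - 2) * (1 - t)" using t assms by simp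
    then show "(1 - t) / (real m - 1) + t \<le> 1" using m1 by (simp add: field_simps)
    show "0 \<le> (1 - t) / (real m - 1)" using t assms m1 by simp
  qed
  then have "F (1 / real m) \<le> F x"
    using assms(4) by (intro deriv_nonneg_imp_mono[OF deriv]) auto
  moreover have "(1 - 1 / real m) / (real m - 1) = 1 / real m"
    using m1 by (simp add: field_simps)
  then have "F (1 / real m) = real m * ?T (1 / real m)"
    by (simp add: F_def algebra_simps)
  ultimately show ?thesis unfolding F_def by simp
qed

lemma sum_binomial_tail_ge:
  fixes q :: "nat \<Rightarrow> real"
  assumes "k \<le> n" "n - 1 - k \<le> k" "m \<ge> 2"
    and nonneg: "\<And>c. c < m \<Longrightarrow> q c \<ge> 0" and sum_one: "(\<Sum>c<m. q c) = 1"
  shows "real m * binomial_tail n k (1 / real m) \<le> (\<Sum>c<m. binomial_tail n k (q c))"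
proof -
  let ?T = "binomial_tail n k"
  have "Max (q ` {..<m}) \<in> q ` {..<m}"
    using assms(3) by (intro Max_in) (auto simp: lessThan_empty_iff)
  then obtain c0 where "c0 < m" "q c0 = Max (q ` {..<m})" by auto
  then have c0: "c0 < m" "\<And>c. c < m \<Longrightarrow> q c \<le> q c0" by auto
  define x where "x = q c0"
  define S where "S = {..<m} - {c0}"
  have sum_S: "(\<Sum>c\<in>S. q c) = 1 - x"
    using sum.remove[of "{..<m}" c0 q] c0(1) sum_one unfolding S_def x_def by simp
  have sum_T: "(\<Sum>c<m. ?T (q c)) = ?T x + (\<Sum>c\<in>S. ?T (q c))"
    using sum.remove[of "{..<m}" c0 "\<lambda>c. ?T (q c)"] c0(1) unfolding S_def x_def by simp
  have card_S: "real (card S) = real m - 1" using c0(1) assms(3) by (simp add: S_def)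
  then have "S \<noteq> {}" using assms(3) by auto
  have "1 \<le> real m * x"
    using sum_mono[of "{..<m}" q "\<lambda>_. x"] c0 sum_one unfolding x_def by simp
  then have x_lower: "1 / real m \<le> x" using assms(3) by (simp add: field_simps)
  have x_upper: "x \<le> 1"
    using sum_S sum_nonneg[of S q] nonneg unfolding S_def by auto
  \<comment> \<open>All weights but a largest one lie in \<open>[0,1/2]\<close>, where the tail is convex.\<close>
  have "q c \<in> {0..1/2}" if "c \<in> S" for c
  proof -
    have "q c \<le> (\<Sum>c\<in>S. q c)"
      using that nonneg by (intro member_le_sum) (auto simp: S_def)
    then show ?thesis using that c0 nonneg sum_S unfolding S_def x_def by fastforce
  qed
  then have "real (card S) * ?T ((\<Sum>c\<in>S. q c) / real (card S)) \<le> (\<Sum>c\<in>S. ?T (q c))"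
    using \<open>S \<noteq> {}\<close>
    by (intro convex_on_mean_le[OF convex_on_binomial_tail[OF assms(1,2)]]) (auto simp: S_def)
  then have "(real m - 1) * ?T ((1 - x) / (real m - 1)) \<le> (\<Sum>c\<in>S. ?T (q c))"
    unfolding card_S sum_S .
  then show ?thesis
    using binomial_tail_exchange[OF assms(1-3) x_lower x_upper] sum_T by linarith
qed

definition hits_weight :: "('a \<Rightarrow> real) \<Rightarrow> 'a set \<Rightarrow> 'a set \<Rightarrow> nat \<Rightarrow> nat \<Rightarrow> real" where
  "hits_weight p R A n j =
     (\<Sum>f\<in>PiE {0..<n} (\<lambda>_. R). if card {i\<in>{0..<n}. f i \<in> A} = j then \<Prod>i\<in>{0..<n}. p (f i) else 0)"

lemma hits_weight_0: "hits_weight p R A 0 j = (if j = 0 then 1 else 0)"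
  by (simp add: hits_weight_def)

lemma hits_weight_Suc:
  assumes "finite R"
  shows "hits_weight p R A (Suc n) j =
    (\<Sum>r\<in>R \<inter> A. p r) * (if j = 0 then 0 else hits_weight p R A n (j - 1)) +
    (\<Sum>r\<in>R - A. p r) * hits_weight p R A n j"
proof -
  let ?P = "PiE {0..<n} (\<lambda>_. R)" and ?hits = "\<lambda>g. card {i\<in>{0..<n}. g i \<in> A}"
  let ?X = "if j = 0 then 0 else hits_weight p R A n (j - 1)" and ?Y = "hits_weight p R A n j"
  define w where "w y g = p y * (if ?hits g + (if y \<in> A then 1 else 0) = j
                                  then \<Prod>i\<in>{0..<n}. p (g i) else 0)" for y g
  have extend: "(if card {i\<in>{0..<Suc n}. (g(n := y)) i \<in> A} = j
                 then \<Prod>i\<in>{0..<Suc n}. p ((g(n := y)) i) else 0) = w y g" for y g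
  proof -
    have "{i\<in>{0..<Suc n}. (g(n := y)) i \<in> A} =
          (if y \<in> A then insert n {i\<in>{0..<n}. g i \<in> A} else {i\<in>{0..<n}. g i \<in> A})"
      by auto
    moreover have "(\<Prod>i\<in>{0..<n}. p ((g(n := y)) i)) = (\<Prod>i\<in>{0..<n}. p (g i))"
      by (rule prod.cong) auto
    ultimately show ?thesis by (simp add: w_def mult.commute)
  qed
  have inner: "(\<Sum>g\<in>?P. w y g) = p y * (if y \<in> A then ?X else ?Y)" for y
    unfolding w_def hits_weight_def sum_distrib_left[symmetric] by (cases j) auto
  have "{0..<Suc n} = insert n {0..<n}" by auto
  then have profiles: "PiE {0..<Suc n} (\<lambda>_. R) = (\<lambda>(y, g). g(n := y)) ` (R \<times> ?P)"
    by (simp add: PiE_insert_eq)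
  have "hits_weight p R A (Suc n) j = (\<Sum>(y, g)\<in>R \<times> ?P. w y g)"
    unfolding hits_weight_def profiles extend[symmetric]
    by (subst sum.reindex[OF inj_combinator]) (auto simp: case_prod_unfold)
  also have "\<dots> = (\<Sum>y\<in>R. p y * (if y \<in> A then ?X else ?Y))"
    unfolding sum.cartesian_product[symmetric] inner ..
  also have "\<dots> = (\<Sum>y\<in>R \<inter> A. p y * ?X) + (\<Sum>y\<in>R - A. p y * ?Y)"
    unfolding sum.Int_Diff[OF assms, of _ A] by (intro arg_cong2[where f = "(+)"] sum.cong) auto
  also have "\<dots> = (\<Sum>r\<in>R \<inter> A. p r) * ?X + (\<Sum>r\<in>R - A. p r) * ?Y"
    by (simp add: sum_distrib_right)
  finally show ?thesis .
qed

lemma hits_weight_eq: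
  assumes "finite R"
  shows "hits_weight p R A n j =
           real (n choose j) * (\<Sum>r\<in>R \<inter> A. p r) ^ j * (\<Sum>r\<in>R - A. p r) ^ (n - j)"
proof (induction n arbitrary: j)
  case 0
  then show ?case by (simp add: hits_weight_0)
next
  case (Suc n)
  note IH = Suc.IH
  define a where "a = (\<Sum>r\<in>R \<inter> A. p r)"
  define b where "b = (\<Sum>r\<in>R - A. p r)"
  have rec: "hits_weight p R A (Suc n) j =
      a * (if j = 0 then 0 else hits_weight p R A n (j - 1)) + b * hits_weight p R A n j"
    unfolding a_def b_def by (rule hits_weight_Suc[OF assms])
  show ?case
  proof (cases j)
    case 0
    then show ?thesis unfolding rec IH a_def[symmetric] b_def[symmetric] by simp
  next
    case (Suc i)
    have shift: "b * (real (n choose Suc i) * a ^ Suc i * b ^ (n - Suc i)) =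
                 real (n choose Suc i) * a ^ Suc i * b ^ (n - i)"
    proof (cases "i < n")
      case True
      then have "n - i = Suc (n - Suc i)" by simp
      then show ?thesis by simp
    qed simp
    have "hits_weight p R A (Suc n) j =
          a * (real (n choose i) * a ^ i * b ^ (n - i)) +
          b * (real (n choose Suc i) * a ^ Suc i * b ^ (n - Suc i))"
      unfolding rec IH a_def[symmetric] b_def[symmetric] using Suc by simp
    also have "\<dots> = real (Suc n choose Suc i) * a ^ Suc i * b ^ (Suc n - Suc i)"
      unfolding shift by (simp add: algebra_simps)
    finally show ?thesis unfolding Suc a_def b_def .
  qed
qed

definition first_place_prob :: "nat \<Rightarrow> (nat list \<Rightarrow> real) \<Rightarrow> nat \<Rightarrow> real" where
  "first_place_prob m p c = (\<Sum>r\<in>{r\<in>rankings m. hd r = c}. p r)"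

definition first_place_majority :: "nat \<Rightarrow> (nat \<Rightarrow> nat list) \<Rightarrow> nat \<Rightarrow> bool" where
  "first_place_majority n f c \<longleftrightarrow> 2 * card {i\<in>{0..<n}. hd (f i) = c} > n"

definition profile_prob :: "nat \<Rightarrow> (nat list \<Rightarrow> real) \<Rightarrow> (nat \<Rightarrow> nat list) \<Rightarrow> real" where
  "profile_prob n p f = (\<Prod>i\<in>{0..<n}. p (f i))"

lemma finite_rankings [simp]: "finite (rankings m)"
  by (simp add: rankings_def)

lemma finite_profiles [simp]: "finite (profiles m n)"
  by (simp add: profiles_def finite_PiE)

lemma set_ranking: "r \<in> rankings m \<Longrightarrow> set r = {0..<m}"
  by (simp add: rankings_def permutations_of_set_def)

lemma ranks_above_hd:
  assumes "d \<in> set r" "d \<noteq> hd r"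
  shows "ranks_above r (hd r) d"
proof -
  obtain j where j: "j < length r" "r ! j = d" using assms(1) by (auto simp: in_set_conv_nth)
  have "r \<noteq> []" using assms(1) by auto
  then have "hd r = r ! 0" by (simp add: hd_conv_nth)
  with j assms(2) show ?thesis
    unfolding ranks_above_def by (intro exI[of _ 0] exI[of _ j]) (auto intro: gr0I)
qed

lemma first_place_majority_imp_condorcet_winner:
  assumes "m > 0" "f \<in> profiles m n" "first_place_majority n f c"
  shows "condorcet_winner m n f c"
proof -
  let ?first = "{i\<in>{0..<n}. hd (f i) = c}"
  have rankings: "set (f i) = {0..<m}" if "i < n" for i
  proof -
    have "f i \<in> rankings m" using assms(2) that by (auto simp: profiles_def)
    then show ?thesis by (rule set_ranking)
  qed
  have "0 < card ?first" using assms(3) unfolding first_place_majority_def by linarith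
  then obtain i where "i \<in> ?first" by (metis card_gt_0_iff ex_in_conv)
  then have i: "i < n" "hd (f i) = c" by simp_all
  have "f i \<noteq> []" using rankings[OF i(1)] assms(1) by auto
  then have "c < m" using hd_in_set[of "f i"] rankings[OF i(1)] i(2) by auto
  moreover have "n < 2 * card {i\<in>{0..<n}. ranks_above (f i) c d}" if "d < m" "d \<noteq> c" for d
  proof -
    have "?first \<subseteq> {i\<in>{0..<n}. ranks_above (f i) c d}"
    proof
      fix i assume i: "i \<in> ?first"
      then have "d \<in> set (f i)" using rankings that by simp
      then show "i \<in> {i\<in>{0..<n}. ranks_above (f i) c d}"
        using ranks_above_hd[of d "f i"] i that by auto
    qed
    then have "card ?first \<le> card {i\<in>{0..<n}. ranks_above (f i) c d}"
      by (intro card_mono) auto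
    then show ?thesis using assms(3) unfolding first_place_majority_def by linarith
  qed
  ultimately show ?thesis unfolding condorcet_winner_def by blast
qed

lemma first_place_majority_unique:
  assumes "first_place_majority n f c" "first_place_majority n f c'"
  shows "c = c'"
proof (rule ccontr)
  assume "c \<noteq> c'"
  let ?A = "{i\<in>{0..<n}. hd (f i) = c}" and ?B = "{i\<in>{0..<n}. hd (f i) = c'}"
  have "card ?A + card ?B = card (?A \<union> ?B)"
    using \<open>c \<noteq> c'\<close> by (intro card_Un_disjoint[symmetric]) auto
  also have "\<dots> \<le> card {0..<n}" by (intro card_mono) auto
  also have "\<dots> = n" by simp
  finally show False using assms unfolding first_place_majority_def by linarith
qed

lemma prob_first_place_majority:
  assumes "(\<Sum>r\<in>rankings m. p r) = 1"
  shows "(\<Sum>f\<in>{f\<in>profiles m n. first_place_majority n f c}. profile_prob n p f) =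
         binomial_tail n (n div 2) (first_place_prob m p c)"
proof -
  let ?A = "{r. hd r = c}" and ?hits = "\<lambda>f. card {i\<in>{0..<n}. f i \<in> {r. hd r = c}}"
  have "(\<Sum>r\<in>rankings m - ?A. p r) = 1 - first_place_prob m p c"
    using sum.Int_Diff[OF finite_rankings, of p m ?A] assms
    by (simp add: first_place_prob_def Int_def conj_commute)
  then have "binomial_tail n (n div 2) (first_place_prob m p c) =
      (\<Sum>j\<in>{Suc (n div 2)..n}. hits_weight p (rankings m) ?A n j)"
    unfolding binomial_tail_def hits_weight_eq[OF finite_rankings]
    by (simp add: first_place_prob_def Int_def conj_commute)
  also have "\<dots> = (\<Sum>f\<in>profiles m n. \<Sum>j\<in>{Suc (n div 2)..n}.
                     if ?hits f = j then profile_prob n p f else 0)"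
    unfolding hits_weight_def profiles_def profile_prob_def by (rule sum.swap)
  also have "\<dots> = (\<Sum>f\<in>profiles m n. if first_place_majority n f c then profile_prob n p f else 0)"
  proof (rule sum.cong[OF refl])
    fix f
    have "?hits f \<le> card {0..<n}" by (intro card_mono) auto
    then have "(?hits f \<in> {Suc (n div 2)..n}) = first_place_majority n f c"
      unfolding first_place_majority_def by simp linarith
    then show "(\<Sum>j\<in>{Suc (n div 2)..n}. if ?hits f = j then profile_prob n p f else 0) =
               (if first_place_majority n f c then profile_prob n p f else 0)"
      by simp
  qed
  also have "\<dots> = (\<Sum>f\<in>{f\<in>profiles m n. first_place_majority n f c}. profile_prob n p f)"
    by (simp add: sum.inter_filter)
  finally show ?thesis ..
qed

lemma prob_some_first_place_majority:
  assumes "(\<Sum>r\<in>rankings m. p r) = 1"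
  shows "(\<Sum>f\<in>{f\<in>profiles m n. \<exists>c<m. first_place_majority n f c}. profile_prob n p f) =
         (\<Sum>c<m. binomial_tail n (n div 2) (first_place_prob m p c))"
proof -
  have "{f\<in>profiles m n. \<exists>c<m. first_place_majority n f c} =
        (\<Union>c\<in>{..<m}. {f\<in>profiles m n. first_place_majority n f c})" by auto
  then have "(\<Sum>f\<in>{f\<in>profiles m n. \<exists>c<m. first_place_majority n f c}. profile_prob n p f) =
      (\<Sum>c<m. \<Sum>f\<in>{f\<in>profiles m n. first_place_majority n f c}. profile_prob n p f)"
    by (simp only:) (rule sum.UNION_disjoint, auto dest: first_place_majority_unique)
  then show ?thesis by (simp add: prob_first_place_majority[OF assms])
qed

lemma sum_first_place_prob:
  assumes "m > 0"
  shows "(\<Sum>c<m. first_place_prob m p c) = (\<Sum>r\<in>rankings m. p r)"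
proof -
  have "hd r < m" if "r \<in> rankings m" for r
    using hd_in_set[of r] set_ranking[OF that] assms by fastforce
  then have partition: "(\<Union>c\<in>{..<m}. {r\<in>rankings m. hd r = c}) = rankings m" by blast
  have "(\<Sum>c<m. \<Sum>r\<in>{r\<in>rankings m. hd r = c}. p r) =
        (\<Sum>r\<in>(\<Union>c\<in>{..<m}. {r\<in>rankings m. hd r = c}). p r)"
    by (rule sum.UNION_disjoint[symmetric]) auto
  then show ?thesis unfolding first_place_prob_def partition .
qed

lemma profile_prob_nonneg:
  assumes "is_ranking_distribution m p" "f \<in> profiles m n"
  shows "0 \<le> profile_prob n p f"
  using assms unfolding profile_prob_def profiles_def is_ranking_distribution_def
  by (intro prod_nonneg) auto

lemma condorcet_prob_ge_first_place_majority:
  assumes "is_ranking_distribution m p" "m > 0"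
  shows "(\<Sum>c<m. binomial_tail n (n div 2) (first_place_prob m p c)) \<le> condorcet_prob m n p"
proof -
  have "(\<Sum>c<m. binomial_tail n (n div 2) (first_place_prob m p c)) =
        (\<Sum>f\<in>{f\<in>profiles m n. \<exists>c<m. first_place_majority n f c}. profile_prob n p f)"
    using assms(1) by (simp add: is_ranking_distribution_def prob_some_first_place_majority)
  also have "\<dots> \<le> (\<Sum>f\<in>{f\<in>profiles m n. \<exists>c. condorcet_winner m n f c}. profile_prob n p f)"
    using assms(1) first_place_majority_imp_condorcet_winner[OF assms(2)]
    by (intro sum_mono2) (auto intro: profile_prob_nonneg)
  finally show ?thesis unfolding condorcet_prob_def profile_prob_def .
qed

lemma condorcet_prob_lower_bound:
  assumes "is_ranking_distribution m p" "m \<ge> 2"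
  shows "real m * binomial_tail n (n div 2) (1 / real m) \<le> condorcet_prob m n p"
proof -
  have "real m * binomial_tail n (n div 2) (1 / real m) \<le>
        (\<Sum>c<m. binomial_tail n (n div 2) (first_place_prob m p c))"
  proof (rule sum_binomial_tail_ge)
    show "0 \<le> first_place_prob m p c" for c
      using assms(1) unfolding first_place_prob_def is_ranking_distribution_def
      by (intro sum_nonneg) auto
    show "(\<Sum>c<m. first_place_prob m p c) = 1"
      using assms sum_first_place_prob[of m p] by (simp add: is_ranking_distribution_def)
  qed (use assms(2) in auto)
  also have "\<dots> \<le> condorcet_prob m n p"
    using assms by (intro condorcet_prob_ge_first_place_majority) auto
  finally show ?thesis .
qed

lemma cyclic_ranking_eq_rotate: "cyclic_ranking m j = rotate j [0..<m]"
  by (rule nth_equalityI) (simp_all add: cyclic_ranking_def nth_rotate)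

lemma cyclic_ranking_in_rankings: "cyclic_ranking m j \<in> rankings m"
  by (simp add: cyclic_ranking_eq_rotate rankings_def permutations_of_set_def)

lemma length_cyclic_ranking [simp]: "length (cyclic_ranking m j) = m"
  by (simp add: cyclic_ranking_def)

lemma nth_cyclic_ranking: "i < m \<Longrightarrow> cyclic_ranking m j ! i = (j + i) mod m"
  by (simp add: cyclic_ranking_def)

lemma hd_cyclic_ranking: "j < m \<Longrightarrow> hd (cyclic_ranking m j) = j"
  by (simp add: hd_conv_nth cyclic_ranking_def)

lemma inj_on_cyclic_ranking: "inj_on (cyclic_ranking m) {0..<m}"
  by (rule inj_onI) (metis atLeastLessThan_iff hd_cyclic_ranking)

lemma cyclic_predecessor_neq:
  fixes c m :: nat
  assumes "m \<ge> 2" "c < m"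
  shows "(c + m - 1) mod m \<noteq> c"
proof (cases c)
  case (Suc c')
  then have "(c + m - 1) mod m = c'" using assms by simp
  then show ?thesis using Suc by simp
qed (use assms in simp)

lemma cyclic_ranking_ranks_above_predecessor:
  assumes "s < m" "c < m" "ranks_above (cyclic_ranking m s) c ((c + m - 1) mod m)"
  shows "s = c"
proof -
  obtain i j where "i < j" "j < m" "cyclic_ranking m s ! i = c"
      "cyclic_ranking m s ! j = (c + m - 1) mod m"
    using assms(3) unfolding ranks_above_def by auto
  then have ij: "i < j" "j < m" "(s + i) mod m = c" "(s + j) mod m = (c + m - 1) mod m"
    by (simp_all add: nth_cyclic_ranking)
  \<comment> \<open>The predecessor of \<open>c\<close> sits just before \<open>c\<close> cyclically, so it can follow \<open>c\<close> only
    if \<open>c\<close> is in position 0 and the predecessor in position \<open>m - 1\<close>.\<close>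
  have "Suc (s + j) mod m = Suc ((s + j) mod m) mod m" by (simp add: mod_Suc_eq)
  also have "\<dots> = Suc (c + m - 1) mod m" using ij(4) by (simp add: mod_Suc_eq)
  also have "Suc (c + m - 1) = c + m" using assms(2) by simp
  finally have "Suc (s + j) mod m = (s + i) mod m" using ij(3) assms(2) by simp
  then have "m dvd Suc j - i"
    using ij(1) mod_eq_dvd_iff_nat[of "s + i" "Suc (s + j)" m] by simp
  then have "m \<le> Suc j - i" using ij(1) by (intro dvd_imp_le) auto
  then have "i = 0" using ij(1,2) by simp
  then show ?thesis using ij(3) assms(1) by simp
qed

lemma condorcet_winner_cyclic_imp_first_place_majority:
  assumes "m \<ge> 2" "\<And>i. i < n \<Longrightarrow> f i \<in> cyclic_ranking m ` {0..<m}" "condorcet_winner m n f c"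
  shows "first_place_majority n f c"
proof -
  define d where "d = (c + m - 1) mod m"
  have "c < m" using assms(3) unfolding condorcet_winner_def by simp
  then have "n < 2 * card {i\<in>{0..<n}. ranks_above (f i) c d}"
    using assms(3) cyclic_predecessor_neq[OF assms(1)] unfolding condorcet_winner_def d_def by auto
  moreover have "{i\<in>{0..<n}. ranks_above (f i) c d} \<subseteq> {i\<in>{0..<n}. hd (f i) = c}"
  proof
    fix i assume i: "i \<in> {i\<in>{0..<n}. ranks_above (f i) c d}"
    then have "i < n" by simp
    then obtain s where s: "s < m" "f i = cyclic_ranking m s" using assms(2) by fastforce
    then have "s = c"
      using cyclic_ranking_ranks_above_predecessor \<open>c < m\<close> i unfolding d_def by auto
    then show "i \<in> {i\<in>{0..<n}. hd (f i) = c}" using i s hd_cyclic_ranking by simp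
  qed
  then have "card {i\<in>{0..<n}. ranks_above (f i) c d} \<le> card {i\<in>{0..<n}. hd (f i) = c}"
    by (intro card_mono) auto
  ultimately show ?thesis unfolding first_place_majority_def by linarith
qed

lemma is_ranking_distribution_p_star:
  assumes "m > 0"
  shows "is_ranking_distribution m (p_star m)"
proof -
  let ?C = "cyclic_ranking m ` {0..<m}"
  have "(\<Sum>r\<in>rankings m. p_star m r) = (\<Sum>r\<in>?C. 1 / real m)"
    using cyclic_ranking_in_rankings
    by (subst sum.mono_neutral_right[of "rankings m" ?C]) (auto simp: p_star_def)
  also have "\<dots> = 1"
    using card_image[OF inj_on_cyclic_ranking, of m] assms by simp
  finally show ?thesis unfolding is_ranking_distribution_def p_star_def by simp
qed

lemma first_place_prob_p_star:
  assumes "c < m"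
  shows "first_place_prob m (p_star m) c = 1 / real m"
proof -
  have "{r\<in>rankings m. hd r = c} \<inter> cyclic_ranking m ` {0..<m} = {cyclic_ranking m c}"
    using cyclic_ranking_in_rankings hd_cyclic_ranking assms by auto
  then show ?thesis
    unfolding first_place_prob_def p_star_def by (simp add: sum.inter_restrict[symmetric])
qed

lemma condorcet_prob_p_star:
  assumes "m \<ge> 2"
  shows "condorcet_prob m n (p_star m) = real m * binomial_tail n (n div 2) (1 / real m)"
proof -
  let ?M = "{f\<in>profiles m n. \<exists>c<m. first_place_majority n f c}"
  let ?W = "{f\<in>profiles m n. \<exists>c. condorcet_winner m n f c}"
  have "profile_prob n (p_star m) f = 0" if "f \<in> ?W - ?M" for f
  proof (rule ccontr)
    assume "profile_prob n (p_star m) f \<noteq> 0"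
    then have nonzero: "\<forall>i\<in>{0..<n}. p_star m (f i) \<noteq> 0" by (simp add: profile_prob_def)
    have cyclic: "f i \<in> cyclic_ranking m ` {0..<m}" if "i < n" for i
    proof (rule ccontr)
      assume "f i \<notin> cyclic_ranking m ` {0..<m}"
      then show False using nonzero[rule_format, of i] that by (simp add: p_star_def)
    qed
    obtain c where "condorcet_winner m n f c" using \<open>f \<in> ?W - ?M\<close> by blast
    then have "c < m" "first_place_majority n f c"
      using condorcet_winner_cyclic_imp_first_place_majority[OF assms cyclic]
      by (simp_all add: condorcet_winner_def)
    then show False using \<open>f \<in> ?W - ?M\<close> by blast
  qed
  moreover have "?M \<subseteq> ?W"
    using first_place_majority_imp_condorcet_winner[of m] assms by fastforce
  ultimately have "condorcet_prob m n (p_star m) = (\<Sum>f\<in>?M. profile_prob n (p_star m) f)"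
    unfolding condorcet_prob_def profile_prob_def[symmetric]
    by (intro sum.mono_neutral_right) auto
  also have "\<dots> = (\<Sum>c<m. binomial_tail n (n div 2) (first_place_prob m (p_star m) c))"
    using is_ranking_distribution_p_star assms
    by (intro prob_some_first_place_majority) (simp add: is_ranking_distribution_def)
  also have "\<dots> = real m * binomial_tail n (n div 2) (1 / real m)"
    by (simp add: first_place_prob_p_star)
  finally show ?thesis .
qed

theorem mainTheorem10:
  fixes m n :: nat
  assumes "m \<ge> 3" and "n \<ge> 1"
  shows "(\<forall>p. is_ranking_distribution m p \<longrightarrow>
            condorcet_prob m n p \<ge> real m * (1 - binom_cdf (n div 2) n (1 / real m)))
         \<and> is_ranking_distribution m (p_star m)
         \<and> condorcet_prob m n (p_star m) = real m * (1 - binom_cdf (n div 2) n (1 / real m))"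
proof -
  have "1 - binom_cdf (n div 2) n (1 / real m) = binomial_tail n (n div 2) (1 / real m)"
    by (intro one_minus_binom_cdf) simp
  moreover have "m \<ge> 2" using assms(1) by simp
  ultimately show ?thesis
    using condorcet_prob_lower_bound is_ranking_distribution_p_star condorcet_prob_p_star
    by simp
qed

end
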